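(* Fix $r>0$ and let $s(\ell)=\sinh^3\ell$, $s^{(-1)}$ its primitive vanishing at $0$ and $s^{(-2)}$ the primitive of $s^{(-1)}$ vanishing at $0$. Define, for $\ell\in[0,+\infty)$ and $\alpha,\beta\in[0,\pi/2)$, \[g(\ell,\alpha,\beta) =\frac43 \ell - \frac{s(\ell)}{9\tanh^2(r) \cos\alpha\cos\beta} +\frac{s^{(-1)}(\ell)}{3\tanh r}\left(\frac1{\cos\alpha}+\frac1{\cos\beta}\right) -s^{(-2)}(\ell),\] and $f(\alpha,\beta)=\sup_\ell g(\ell,\alpha,\beta)$. Then: (1) for each fixed $\alpha$, the maximum of $\ell\mapsto g(\ell,\alpha,\alpha)$ is attained at $\ell=2\operatorname{arctanh}(\tanh r\cos\alpha)$ and only there; (2) for all $\alpha,\beta$, $f(\alpha,\beta)\le \frac12\left(f(\alpha,\alpha)+f(\beta,\beta)\right)$, with equality only for $\alpha=\beta$. *)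

theory Defs
  imports "HOL-Analysis.Analysis"
begin

definition s :: "real \<Rightarrow> real" where
  "s l = sinh l ^ 3"

definition s1 :: "real \<Rightarrow> real" where
  "s1 l = integral {0..l} s"

definition s2 :: "real \<Rightarrow> real" where
  "s2 l = integral {0..l} s1"

definition g :: "real \<Rightarrow> real \<Rightarrow> real \<Rightarrow> real \<Rightarrow> real" where
  "g r l \<alpha> \<beta> = 4/3 * l - s l / (9 * (tanh r)^2 * cos \<alpha> * cos \<beta>)
     + s1 l / (3 * tanh r) * (1 / cos \<alpha> + 1 / cos \<beta>) - s2 l"

definition f :: "real \<Rightarrow> real \<Rightarrow> real \<Rightarrow> real" where
  "f r \<alpha> \<beta> = (SUP l\<in>{0..}. g r l \<alpha> \<beta>)"

end

theory Submission
  imports Defs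
begin

text \<open>
  Substituting \<open>x = tanh (l/2)\<close>, \<open>p = tanh r * cos \<alpha>\<close>, \<open>q = tanh r * cos \<beta>\<close> turns \<open>g\<close>
  into \<open>G x p q\<close>, a rational function of \<open>x\<close> plus \<open>4/3 * artanh x\<close>, whose \<open>x\<close>-derivative is a
  positive multiple of the polynomial \<open>crit x p q\<close>. On the diagonal \<open>crit x p p\<close> is \<open>p - x\<close>
  times a positive factor, which gives (1) and \<open>f r \<alpha> \<alpha> = Phi p\<close>. For \<open>p \<noteq> q\<close> the supremum is
  attained at a critical point \<open>x\<close> strictly between \<open>p\<close> and \<open>q\<close>. Solving \<open>crit x p q = 0\<close> for
  \<open>q\<close> gives a curve \<open>q = partner x p\<close> through \<open>(p, p)\<close>; along it
  \<open>G x p q - (Phi p + Phi q) / 2\<close> vanishes at \<open>x = p\<close> and has derivative of the sign of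
  \<open>p - x\<close>, so it is negative at every other critical point, which gives (2).
\<close>

lemma one_minus_square_pos: "\<bar>x::real\<bar> < 1 \<Longrightarrow> 0 < 1 - x\<^sup>2"
  by (simp add: abs_square_less_1)

lemma tanh_artanh_real:
  fixes x :: real
  assumes "\<bar>x\<bar> < 1"
  shows "tanh (artanh x) = x"
proof -
  have pos: "(1 + x) / (1 - x) > 0" using assms by (simp add: abs_less_iff)
  have e: "exp (- 2 * artanh x) = (1 - x) / (1 + x)"
    using pos by (simp add: artanh_def exp_minus exp_ln inverse_eq_divide)
  have "1 + x \<noteq> 0" "1 - x \<noteq> 0" using assms by (auto simp: abs_less_iff)
  then show ?thesis unfolding tanh_real_altdef e by (simp add: field_simps)
qed

lemma tanh_half_eq_iff:
  fixes l x :: real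
  assumes "\<bar>x\<bar> < 1"
  shows "tanh (l/2) = x \<longleftrightarrow> l = 2 * artanh x"
  using tanh_artanh_real[OF assms] artanh_tanh_real[of "l/2"] by auto

lemma sinh_double_tanh: "sinh (2 * y) = 2 * tanh y / (1 - (tanh y)\<^sup>2)"
  and cosh_double_tanh: "cosh (2 * y) = (1 + (tanh y)\<^sup>2) / (1 - (tanh y)\<^sup>2)"
  for y :: real
proof -
  have c: "cosh y \<noteq> 0" by (metis cosh_real_pos less_irrefl)
  have "1 - (tanh y)\<^sup>2 = ((cosh y)\<^sup>2 - (sinh y)\<^sup>2) / (cosh y)\<^sup>2"
    using c by (simp add: tanh_def power_divide field_simps)
  then have e: "1 - (tanh y)\<^sup>2 = 1 / (cosh y)\<^sup>2"
    using cosh_square_eq[of y] by simp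
  show "sinh (2 * y) = 2 * tanh y / (1 - (tanh y)\<^sup>2)"
    unfolding e sinh_double using c by (simp add: tanh_def field_simps power2_eq_square)
  show "cosh (2 * y) = (1 + (tanh y)\<^sup>2) / (1 - (tanh y)\<^sup>2)"
    unfolding e cosh_double using c by (simp add: tanh_def field_simps power2_eq_square)
qed

lemma s1_eq:
  assumes "0 \<le> l"
  shows "s1 l = (cosh l)^3 / 3 - cosh l + 2/3"
proof -
  have "((\<lambda>x. (cosh x)^3 / 3 - cosh x) has_real_derivative s x) (at x within {0..l})" for x
  proof -
    have "((\<lambda>x. (cosh x)^3 / 3 - cosh x) has_real_derivative 3 * (cosh x)\<^sup>2 * sinh x / 3 - sinh x)
        (at x within {0..l})"
      by (rule derivative_eq_intros refl | simp)+
    moreover have "3 * (cosh x)\<^sup>2 * sinh x / 3 - sinh x = s x"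
      unfolding s_def using cosh_square_eq[of x] by (simp add: algebra_simps power3_eq_cube power2_eq_square)
    ultimately show ?thesis by simp
  qed
  then have "(s has_integral ((cosh l)^3 / 3 - cosh l) - ((cosh 0)^3 / 3 - cosh 0)) {0..l}"
    using assms by (intro fundamental_theorem_of_calculus) (auto simp: has_real_derivative_iff_has_vector_derivative)
  then show ?thesis unfolding s1_def by (simp add: integral_unique)
qed

lemma s2_eq:
  assumes "0 \<le> l"
  shows "s2 l = (sinh l)^3 / 9 - 2 * sinh l / 3 + 2 * l / 3"
proof -
  have "((\<lambda>x. (sinh x)^3 / 9 - 2 * sinh x / 3 + 2 * x / 3) has_real_derivative
      (cosh x)^3 / 3 - cosh x + 2/3) (at x within {0..l})" for x
  proof -
    have "((\<lambda>x. (sinh x)^3 / 9 - 2 * sinh x / 3 + 2 * x / 3) has_real_derivative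
        3 * (sinh x)\<^sup>2 * cosh x / 9 - 2 * cosh x / 3 + 2/3) (at x within {0..l})"
      by (rule derivative_eq_intros refl | simp)+
    moreover have "3 * (sinh x)\<^sup>2 * cosh x / 9 - 2 * cosh x / 3 + 2/3 = (cosh x)^3 / 3 - cosh x + 2/3"
      using sinh_square_eq[of x] by algebra
    ultimately show ?thesis by simp
  qed
  then have "((\<lambda>x. (cosh x)^3 / 3 - cosh x + 2/3) has_integral
      ((sinh l)^3 / 9 - 2 * sinh l / 3 + 2 * l / 3) - ((sinh 0)^3 / 9 - 2 * sinh 0 / 3 + 2 * 0 / 3)) {0..l}"
    using assms by (intro fundamental_theorem_of_calculus) (auto simp: has_real_derivative_iff_has_vector_derivative)
  moreover have "integral {0..l} s1 = integral {0..l} (\<lambda>x. (cosh x)^3 / 3 - cosh x + 2/3)"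
    by (rule integral_cong) (simp add: s1_eq)
  ultimately show ?thesis unfolding s2_def by (simp add: integral_unique)
qed

section \<open>The substitution \<open>x = tanh (l/2)\<close>\<close>

definition G0 :: "real \<Rightarrow> real" where
  "G0 x = 4/3 * artanh x + 4*x / (3*(1-x\<^sup>2)) - 8*x^3 / (9*(1-x\<^sup>2)^3)"

definition G1 :: "real \<Rightarrow> real" where
  "G1 x = 4*x^4*(3-x\<^sup>2) / (9*(1-x\<^sup>2)^3)"

definition G2 :: "real \<Rightarrow> real" where
  "G2 x = 8*x^3 / (9*(1-x\<^sup>2)^3)"

definition G :: "real \<Rightarrow> real \<Rightarrow> real \<Rightarrow> real" where
  "G x p q = G0 x + (1/p + 1/q) * G1 x - G2 x / (p*q)"

definition Phi :: "real \<Rightarrow> real" where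
  "Phi p = 4/3 * artanh p + 4*p / (9*(1-p\<^sup>2))"

lemma G_hyperbolic:
  assumes "p \<noteq> 0" "q \<noteq> 0" "1 - x\<^sup>2 \<noteq> 0"
  shows "G x p q = 4/3 * artanh x + 2/3 * (2*x/(1-x\<^sup>2)) - (2*x/(1-x\<^sup>2))^3/9
           - (2*x/(1-x\<^sup>2))^3 / (9*p*q)
           + (1/p + 1/q) * (((1+x\<^sup>2)/(1-x\<^sup>2))^3/3 - (1+x\<^sup>2)/(1-x\<^sup>2) + 2/3) / 3"
proof -
  \<comment> \<open>naming \<open>1 - x\<^sup>2\<close> keeps \<open>field_simps\<close> from expanding its powers; \<open>algebra\<close> then closes the goal\<close>
  obtain u where u: "u = 1 - x\<^sup>2" by blast
  have "u \<noteq> 0" using u assms by simp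
  with assms show ?thesis unfolding G_def G0_def G1_def G2_def u[symmetric]
    apply (simp add: field_simps)
    using u by algebra
qed

lemma g_eq_G:
  assumes "0 \<le> l" "tanh r \<noteq> 0" "cos \<alpha> \<noteq> 0" "cos \<beta> \<noteq> 0"
  shows "g r l \<alpha> \<beta> = G (tanh (l/2)) (tanh r * cos \<alpha>) (tanh r * cos \<beta>)"
proof -
  define x where "x = tanh (l/2)"
  have l: "l = 2 * (l/2)" by simp
  have "\<bar>x\<bar> < 1" unfolding x_def using tanh_real_bounds[of "l/2"] by (simp add: abs_less_iff)
  then have "1 - x\<^sup>2 \<noteq> 0" using one_minus_square_pos by force
  moreover have "sinh l = 2*x/(1-x\<^sup>2)" "cosh l = (1+x\<^sup>2)/(1-x\<^sup>2)"
    unfolding x_def by (subst l, rule sinh_double_tanh cosh_double_tanh)+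
  moreover have "artanh x = l/2" by (simp add: x_def artanh_tanh_real)
  ultimately have "G x (tanh r * cos \<alpha>) (tanh r * cos \<beta>) = 2/3 * l + 2/3 * sinh l - (sinh l)^3/9
      - (sinh l)^3 / (9 * (tanh r * cos \<alpha>) * (tanh r * cos \<beta>))
      + (1/(tanh r * cos \<alpha>) + 1/(tanh r * cos \<beta>)) * ((cosh l)^3/3 - cosh l + 2/3) / 3"
    using assms by (simp add: G_hyperbolic)
  also have "\<dots> = g r l \<alpha> \<beta>"
    using assms by (simp add: g_def s_def s1_eq s2_eq field_simps power2_eq_square)
  finally show ?thesis unfolding x_def by simp
qed

lemma G_diag:
  assumes "\<bar>p\<bar> < 1" "p \<noteq> 0"
  shows "G p p p = Phi p"
proof -
  obtain u where u: "u = 1 - p\<^sup>2" by blast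
  have "u \<noteq> 0" using u one_minus_square_pos[OF assms(1)] by simp
  with assms show ?thesis unfolding G_def G0_def G1_def G2_def Phi_def u[symmetric]
    apply (simp add: field_simps)
    using u by algebra
qed

lemma G0_deriv:
  assumes "\<bar>x\<bar> < 1"
  shows "(G0 has_real_derivative 8*(1-3*x\<^sup>2) / (3*(1-x\<^sup>2)^4)) (at x within S)"
proof -
  have h: "1 - x\<^sup>2 \<noteq> 0" using one_minus_square_pos[OF assms] by simp
  obtain u where u: "u = 1 - x\<^sup>2" by blast
  show ?thesis unfolding G0_def
    apply (rule derivative_eq_intros refl | (use assms h in simp; fail))+
    using h apply (simp add: u[symmetric])
    apply (simp add: field_simps)
    using u by algebra
qed

lemma G1_deriv:
  assumes "\<bar>x\<bar> < 1"
  shows "(G1 has_real_derivative 16*x^3 / (3*(1-x\<^sup>2)^4)) (at x within S)"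
proof -
  have h: "1 - x\<^sup>2 \<noteq> 0" using one_minus_square_pos[OF assms] by simp
  obtain u where u: "u = 1 - x\<^sup>2" by blast
  show ?thesis unfolding G1_def
    apply (rule derivative_eq_intros refl | (use assms h in simp; fail))+
    using h apply (simp add: u[symmetric])
    apply (simp add: field_simps)
    using u by algebra
qed

lemma G2_deriv:
  assumes "\<bar>x\<bar> < 1"
  shows "(G2 has_real_derivative 8*x\<^sup>2*(1+x\<^sup>2) / (3*(1-x\<^sup>2)^4)) (at x within S)"
proof -
  have h: "1 - x\<^sup>2 \<noteq> 0" using one_minus_square_pos[OF assms] by simp
  obtain u where u: "u = 1 - x\<^sup>2" by blast
  show ?thesis unfolding G2_def
    apply (rule derivative_eq_intros refl | (use assms h in simp; fail))+
    using h apply (simp add: u[symmetric])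
    apply (simp add: field_simps)
    using u by algebra
qed

lemma Phi_deriv:
  assumes "\<bar>x\<bar> < 1"
  shows "(Phi has_real_derivative 8*(2-x\<^sup>2) / (9*(1-x\<^sup>2)\<^sup>2)) (at x within S)"
proof -
  have h: "1 - x\<^sup>2 \<noteq> 0" using one_minus_square_pos[OF assms] by simp
  obtain u where u: "u = 1 - x\<^sup>2" by blast
  show ?thesis unfolding Phi_def
    apply (rule derivative_eq_intros refl | (use assms h in simp; fail))+
    using h apply (simp add: u[symmetric])
    apply (simp add: field_simps)
    using u by algebra
qed

definition crit :: "real \<Rightarrow> real \<Rightarrow> real \<Rightarrow> real" where
  "crit x p q = p*q*(1-3*x\<^sup>2) + 2*(p+q)*x^3 - x\<^sup>2 - x^4"

lemma G_curve_deriv: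
  assumes "\<bar>t\<bar> < 1" "p \<noteq> 0" "Q t \<noteq> 0" "(Q has_real_derivative Q') (at t)"
  shows "((\<lambda>t. G t p (Q t)) has_real_derivative
           8 * crit t p (Q t) / (3*p*Q t*(1-t\<^sup>2)^4) + Q' * (G2 t / p - G1 t) / (Q t)\<^sup>2) (at t)"
proof -
  define q where "q = Q t"
  define d0 d1 d2 where "d0 = 8*(1-3*t\<^sup>2) / (3*(1-t\<^sup>2)^4)" and "d1 = 16*t^3 / (3*(1-t\<^sup>2)^4)"
    and "d2 = 8*t\<^sup>2*(1+t\<^sup>2) / (3*(1-t\<^sup>2)^4)"
  have "G t' p (Q t') = G0 t' + G1 t' / p + (G1 t' - G2 t' / p) / Q t'" for t'
    by (simp add: G_def diff_divide_distrib divide_divide_eq_left algebra_simps)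
  moreover have "((\<lambda>t. G0 t + G1 t / p + (G1 t - G2 t / p) / Q t) has_real_derivative
      d0 + d1 / p + ((d1 - d2 / p) * q - (G1 t - G2 t / p) * Q') / (q * q)) (at t)"
    unfolding d0_def d1_def d2_def q_def using assms
    by (intro DERIV_add DERIV_divide DERIV_diff DERIV_cdivide G0_deriv G1_deriv G2_deriv) auto
  moreover have "d0 + d1 / p + ((d1 - d2 / p) * q - (G1 t - G2 t / p) * Q') / (q * q)
      = (d0 + d1 / p + (d1 - d2 / p) / q) + Q' * (G2 t / p - G1 t) / q\<^sup>2"
    using assms(3) unfolding q_def by (simp add: field_simps power2_eq_square)
  moreover have "d0 + d1 / p + (d1 - d2 / p) / q = 8 * crit t p q / (3*p*q*(1-t\<^sup>2)^4)"
    using one_minus_square_pos[OF assms(1)] assms(2,3)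
    unfolding d0_def d1_def d2_def crit_def q_def by (simp add: field_simps)
  ultimately show ?thesis unfolding q_def by simp
qed

lemma G_deriv:
  assumes "\<bar>x\<bar> < 1" "p \<noteq> 0" "q \<noteq> 0"
  shows "((\<lambda>x. G x p q) has_real_derivative 8 * crit x p q / (3*p*q*(1-x\<^sup>2)^4)) (at x)"
  using G_curve_deriv[of x p "\<lambda>_. q" 0] assms by simp

lemma G_continuous_on:
  assumes "-1 < u" "v < 1" "p \<noteq> 0" "q \<noteq> 0"
  shows "continuous_on {u..v} (\<lambda>x. G x p q)"
proof (intro continuous_at_imp_continuous_on ballI)
  fix y assume "y \<in> {u..v}"
  then have "\<bar>y\<bar> < 1" using assms by auto
  with assms show "isCont (\<lambda>x. G x p q) y" by (blast intro: DERIV_isCont G_deriv)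
qed

lemma G_increasing_where_crit_pos:
  assumes "0 < p" "0 < q" "-1 < u" "u < v" "v < 1"
    and "\<And>y. u < y \<Longrightarrow> y < v \<Longrightarrow> 0 < crit y p q"
  shows "G u p q < G v p q"
proof (rule DERIV_pos_imp_increasing_open[OF \<open>u < v\<close>])
  fix y assume y: "u < y" "y < v"
  then have "\<bar>y\<bar> < 1" "0 < 1 - y\<^sup>2" using assms one_minus_square_pos by auto
  with y assms show "\<exists>d. ((\<lambda>x. G x p q) has_real_derivative d) (at y) \<and> 0 < d"
    by (intro exI[of _ "8 * crit y p q / (3*p*q*(1-y\<^sup>2)^4)"] conjI G_deriv) auto
qed (use assms G_continuous_on in auto)

lemma G_decreasing_where_crit_neg:
  assumes "0 < p" "0 < q" "-1 < u" "u < v" "v < 1"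
    and "\<And>y. u < y \<Longrightarrow> y < v \<Longrightarrow> crit y p q < 0"
  shows "G v p q < G u p q"
proof (rule DERIV_neg_imp_decreasing_open[OF \<open>u < v\<close>])
  fix y assume y: "u < y" "y < v"
  then have "\<bar>y\<bar> < 1" "0 < 1 - y\<^sup>2" using assms one_minus_square_pos by auto
  with y assms show "\<exists>d. ((\<lambda>x. G x p q) has_real_derivative d) (at y) \<and> d < 0"
    by (intro exI[of _ "8 * crit y p q / (3*p*q*(1-y\<^sup>2)^4)"] conjI G_deriv)
       (auto intro!: divide_neg_pos)
qed (use assms G_continuous_on in auto)

section \<open>The diagonal\<close>

lemma crit_diag: "crit x p p = (p - x) * ((1-p)*(x^3+x) + p*(1-x)*(1+2*x-x\<^sup>2))"
  unfolding crit_def by algebra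

lemma G_diag_max:
  assumes "0 < p" "p < 1" "0 \<le> x" "x < 1" "x \<noteq> p"
  shows "G x p p < G p p p"
proof -
  have pos: "0 < (1-p)*(y^3+y) + p*(1-y)*(1+2*y-y\<^sup>2)" if "0 \<le> y" "y < 1" for y
  proof -
    have "0 < 1 + y*(2-y)" using that by (simp add: add_pos_nonneg)
    then have "0 < 1+2*y-y\<^sup>2" by (simp add: algebra_simps power2_eq_square)
    then have "0 < p*(1-y)*(1+2*y-y\<^sup>2)" using assms that by simp
    moreover have "0 \<le> (1-p)*(y^3+y)" using assms that by simp
    ultimately show ?thesis by linarith
  qed
  show ?thesis
  proof (cases "x < p")
    case True
    show ?thesis
      using assms True pos by (intro G_increasing_where_crit_pos) (auto simp: crit_diag)
  next
    case False
    show ?thesis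
      using assms False pos by (intro G_decreasing_where_crit_neg) (auto simp: crit_diag mult_neg_pos)
  qed
qed

section \<open>Maximisation off the diagonal\<close>

definition crit_den :: "real \<Rightarrow> real \<Rightarrow> real" where
  "crit_den t p = p*(1-3*t\<^sup>2) + 2*t^3"

definition crit_num :: "real \<Rightarrow> real \<Rightarrow> real" where
  "crit_num t p = t\<^sup>2*(1+t\<^sup>2-2*p*t)"

lemma crit_eq: "crit t p q = q * crit_den t p - crit_num t p"
  unfolding crit_def crit_den_def crit_num_def by algebra

lemma crit_split: "crit t p q = t*(1-t\<^sup>2)*(p-t) + (q-t) * crit_den t p"
  unfolding crit_def crit_den_def by algebra

lemma crit_den_pos:
  assumes "0 < p" "p < 1" "0 \<le> t"
  shows "0 < crit_den t p"
proof -
  have "crit_den t p = p*(1-p\<^sup>2) + (t-p)\<^sup>2*(2*t+p)"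
    unfolding crit_den_def by algebra
  moreover have "0 < p*(1-p\<^sup>2)" using assms by (auto intro!: mult_pos_pos one_minus_square_pos)
  moreover have "0 \<le> (t-p)\<^sup>2*(2*t+p)" using assms by simp
  ultimately show ?thesis by linarith
qed

lemma crit_pos_below:
  assumes "0 < p" "p < 1" "0 < q" "p \<noteq> q" "0 \<le> y" "y \<le> min p q"
  shows "0 < crit y p q"
proof -
  have "0 < 1 - y\<^sup>2" using one_minus_square_pos[of y] assms by auto
  then have "0 \<le> y*(1-y\<^sup>2)*(p-y)" "0 < y \<Longrightarrow> y < p \<Longrightarrow> 0 < y*(1-y\<^sup>2)*(p-y)"
    using assms by auto
  moreover have "0 < crit_den y p" using crit_den_pos assms by simp
  then have "0 \<le> (q-y) * crit_den y p" "y < q \<Longrightarrow> 0 < (q-y) * crit_den y p" using assms by auto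
  moreover have "y < q \<or> 0 < y \<and> y < p" using assms by auto
  ultimately show ?thesis unfolding crit_split by linarith
qed

lemma crit_neg_above:
  assumes "0 < p" "p < 1" "0 < q" "p \<noteq> q" "max p q \<le> y" "y < 1"
  shows "crit y p q < 0"
proof -
  have "0 < y*(1-y\<^sup>2)" using assms by (auto intro!: mult_pos_pos one_minus_square_pos)
  then have "y*(1-y\<^sup>2)*(p-y) \<le> 0" "p < y \<Longrightarrow> y*(1-y\<^sup>2)*(p-y) < 0"
    using assms by (auto simp: mult_nonneg_nonpos mult_pos_neg)
  moreover have "0 < crit_den y p" using crit_den_pos assms by simp
  then have "(q-y) * crit_den y p \<le> 0" "q < y \<Longrightarrow> (q-y) * crit_den y p < 0"
    using assms by (auto simp: mult_nonpos_nonneg mult_neg_pos)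
  moreover have "p < y \<or> q < y" using assms by auto
  ultimately show ?thesis unfolding crit_split by linarith
qed

lemma G_max_at_crit:
  assumes "0 < p" "p < 1" "0 < q" "q < 1" "p \<noteq> q"
  obtains x where "min p q < x" "x < max p q" "crit x p q = 0"
    "\<And>y. 0 \<le> y \<Longrightarrow> y < 1 \<Longrightarrow> G y p q \<le> G x p q"
proof -
  define a b where "a = min p q" and "b = max p q"
  have ab: "0 < a" "a < b" "b < 1" using assms unfolding a_def b_def by auto
  have "continuous_on {a..b} (\<lambda>y. G y p q)" using ab assms by (intro G_continuous_on) auto
  then have "\<exists>x\<in>{a..b}. \<forall>y\<in>{a..b}. G y p q \<le> G x p q"
    using ab by (intro continuous_attains_sup) auto
  then obtain x where x: "a \<le> x" "x \<le> b" "\<And>y. a \<le> y \<Longrightarrow> y \<le> b \<Longrightarrow> G y p q \<le> G x p q"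
    by auto
  have max: "G y p q \<le> G x p q" if "0 \<le> y" "y < 1" for y
  proof -
    consider "y < a" | "a \<le> y" "y \<le> b" | "b < y" by linarith
    then show ?thesis
    proof cases
      case 1
      have "0 < crit z p q" if "y < z" "z < a" for z
        using crit_pos_below[of p q z] assms that \<open>0 \<le> y\<close> unfolding a_def by simp
      then have "G y p q < G a p q"
        using G_increasing_where_crit_pos[of p q y a] assms ab \<open>0 \<le> y\<close> 1 by simp
      then show ?thesis using x(3)[of a] ab by simp
    next
      case 3
      have "crit z p q < 0" if "b < z" "z < y" for z
        using crit_neg_above[of p q z] assms that \<open>y < 1\<close> unfolding b_def by simp
      then have "G y p q < G b p q"
        using G_decreasing_where_crit_neg[of p q b y] assms ab \<open>y < 1\<close> 3 by simp
      then show ?thesis using x(3)[of b] ab by simp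
    qed (use x in simp)
  qed
  have "\<bar>x\<bar> < 1" "0 < 1 - x\<^sup>2" using x ab one_minus_square_pos[of x] by auto
  have "8 * crit x p q / (3*p*q*(1-x\<^sup>2)^4) = 0"
  proof (rule DERIV_local_max[OF G_deriv[OF \<open>\<bar>x\<bar> < 1\<close>]])
    show "0 < min x (1 - x)" using x ab by simp
    show "\<forall>y. \<bar>x - y\<bar> < min x (1 - x) \<longrightarrow> G y p q \<le> G x p q"
      using max by (simp add: abs_less_iff)
  qed (use assms in simp_all)
  then have "crit x p q = 0" using assms \<open>0 < 1 - x\<^sup>2\<close> by simp
  then have "x \<noteq> a" "x \<noteq> b"
    using crit_pos_below[of p q a] crit_neg_above[of p q b] assms ab unfolding a_def b_def by auto
  then have "a < x" "x < b" using x(1,2) by auto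
  then show ?thesis
    using that[of x] \<open>crit x p q = 0\<close> max unfolding a_def b_def by blast
qed

section \<open>Comparison with the diagonal along the critical curve\<close>

definition partner :: "real \<Rightarrow> real \<Rightarrow> real" where
  "partner t p = crit_num t p / crit_den t p"

lemma crit_eq_0_iff_partner:
  assumes "crit_den t p \<noteq> 0"
  shows "crit t p q = 0 \<longleftrightarrow> q = partner t p"
  using assms unfolding crit_eq partner_def by (auto simp: field_simps)

lemma partner_self:
  assumes "0 < p" "p < 1"
  shows "partner p p = p"
proof -
  have "crit p p p = 0" unfolding crit_def by algebra
  then show ?thesis using crit_eq_0_iff_partner[of p p p] crit_den_pos[of p p] assms by simp
qed

lemma partner_pos:
  assumes "0 < p" "p < 1" "0 < t"
  shows "0 < partner t p"
proof -
  have "1 + t\<^sup>2 - 2*p*t = (1-t)\<^sup>2 + 2*t*(1-p)" by algebra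
  then have "0 < crit_num t p" unfolding crit_num_def using assms by (simp add: add_nonneg_pos)
  then show ?thesis unfolding partner_def using crit_den_pos assms by simp
qed

lemma partner_less_1_iff:
  assumes "0 < p" "p < 1" "0 \<le> t" "t < 1"
  shows "partner t p < 1 \<longleftrightarrow> t\<^sup>2 < p*(1+2*t)"
proof -
  have "crit_den t p - crit_num t p = (1-t)\<^sup>2 * (p*(1+2*t) - t\<^sup>2)"
    unfolding crit_den_def crit_num_def by algebra
  moreover have "0 < (1-t)\<^sup>2" using assms by simp
  ultimately have "crit_num t p < crit_den t p \<longleftrightarrow> t\<^sup>2 < p*(1+2*t)"
    by (smt (verit) zero_less_mult_iff)
  then show ?thesis unfolding partner_def using crit_den_pos assms by simp
qed

lemma partner_deriv:
  assumes "crit_den t p \<noteq> 0"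
  shows "((\<lambda>t. partner t p) has_real_derivative
           2*t*(1-t\<^sup>2)*(p + 3*p*t\<^sup>2 - 3*t*p\<^sup>2 - t^3) / (crit_den t p)\<^sup>2) (at t)"
proof -
  have "((\<lambda>t. partner t p) has_real_derivative
      ((2*t + 4*t^3 - 6*p*t\<^sup>2) * crit_den t p - crit_num t p * (6*t\<^sup>2 - 6*p*t))
        / (crit_den t p * crit_den t p)) (at t)"
    unfolding partner_def crit_num_def crit_den_def using assms[unfolded crit_den_def]
    by (auto intro!: derivative_eq_intros simp: algebra_simps power2_eq_square power3_eq_cube)
  moreover have "(2*t + 4*t^3 - 6*p*t\<^sup>2) * crit_den t p - crit_num t p * (6*t\<^sup>2 - 6*p*t)
      = 2*t*(1-t\<^sup>2)*(p + 3*p*t\<^sup>2 - 3*t*p\<^sup>2 - t^3)"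
    unfolding crit_den_def crit_num_def by algebra
  ultimately show ?thesis by (simp add: power2_eq_square)
qed

lemma partner_slope_pos:
  fixes p t :: real
  assumes "0 < p" "p < 1" "0 < t" "t < 1" "t\<^sup>2 < p*(1+2*t)"
  shows "0 < p + 3*p*t\<^sup>2 - 3*t*p\<^sup>2 - t^3"
proof -
  define k e where "k = 1 + 2*t - t\<^sup>2" and "e = p*(1+2*t) - t\<^sup>2"
  have "k*(1+2*t)*(p + 3*p*t\<^sup>2 - 3*t*p\<^sup>2 - t^3)
      = 3*t*k*e*(1-p) + (1+2*t)*(1-t)^3*e + t\<^sup>2*(1+t)*(1-t\<^sup>2)*(1-p)"
    unfolding k_def e_def by algebra
  moreover have "0 < 1 - t\<^sup>2" using one_minus_square_pos[of t] assms by simp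
  moreover have "0 < k" "0 < e" unfolding k_def e_def using assms \<open>0 < 1 - t\<^sup>2\<close> by auto
  ultimately have "0 < k*(1+2*t)*(p + 3*p*t\<^sup>2 - 3*t*p\<^sup>2 - t^3)"
    using assms by (simp add: add_pos_pos)
  moreover have "0 < k*(1+2*t)" using \<open>0 < k\<close> assms by simp
  ultimately show ?thesis by (simp add: zero_less_mult_iff)
qed

lemma crit_cubic_pos:
  fixes q t :: real
  assumes "0 < q" "q < 1" "0 < t" "t < 1"
  shows "0 < 2*q + t^3 - q^3 - t*q\<^sup>2 - t\<^sup>2*q"
proof -
  have "2*q + t^3 - q^3 - t*q\<^sup>2 - t\<^sup>2*q = t^3*(1-q) + q*(1-t)*(1-t\<^sup>2) + q*(1-q)*(q+1+t)"
    by algebra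
  moreover have "0 < 1 - t\<^sup>2" using one_minus_square_pos[of t] assms by simp
  ultimately show ?thesis using assms by (simp add: add_pos_pos)
qed

lemma G_Phi_partial_q_at_crit:
  assumes "0 < p" "0 < q" "q < 1" "0 \<le> t" "t < 1" "crit t p q = 0"
  shows "(G2 t / p - G1 t) / q\<^sup>2 - 4*(2-q\<^sup>2) / (9*(1-q\<^sup>2)\<^sup>2)
       = 4*(p-t)*t*(2*q + t^3 - q^3 - t*q\<^sup>2 - t\<^sup>2*q) / (9*p*q\<^sup>2*(1-t\<^sup>2)\<^sup>2*(1-q\<^sup>2)\<^sup>2)"
proof -
  define T where "T = t^3*(2-3*p*t+p*t^3)*(1-q\<^sup>2)\<^sup>2 - p*q\<^sup>2*(2-q\<^sup>2)*(1-t\<^sup>2)^3"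
  have "crit_den t q * (T - (p-t)*t*(1-t\<^sup>2)*(2*q + t^3 - q^3 - t*q\<^sup>2 - t\<^sup>2*q))
      = (t^3*(t^3-3*t)*(1-q\<^sup>2)\<^sup>2 - q\<^sup>2*(2-q\<^sup>2)*(1-t\<^sup>2)^3
         - t*(1-t\<^sup>2)*(2*q + t^3 - q^3 - t*q\<^sup>2 - t\<^sup>2*q)) * crit t p q"
    unfolding T_def crit_den_def crit_def by algebra
  moreover have "0 < crit_den t q" using crit_den_pos assms by simp
  ultimately have T: "T = (p-t)*t*(1-t\<^sup>2)*(2*q + t^3 - q^3 - t*q\<^sup>2 - t\<^sup>2*q)"
    using assms(6) by simp
  have "0 < 1 - t\<^sup>2" "0 < 1 - q\<^sup>2" using one_minus_square_pos assms by auto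
  obtain u z c where u: "u = 1 - t\<^sup>2" and z: "z = 1 - q\<^sup>2"
    and c: "c = 2*q + t^3 - q^3 - t*q\<^sup>2 - t\<^sup>2*q" by blast
  have "u \<noteq> 0" "z \<noteq> 0" using u z \<open>0 < 1 - t\<^sup>2\<close> \<open>0 < 1 - q\<^sup>2\<close> by auto
  then have "(G2 t / p - G1 t) / q\<^sup>2 - 4*(2-q\<^sup>2) / (9*(1-q\<^sup>2)\<^sup>2) = 4*T / (9*p*q\<^sup>2*u^3*z\<^sup>2)"
    unfolding G1_def G2_def T_def u[symmetric] z[symmetric] using assms
    by (simp add: field_simps power2_eq_square power3_eq_cube power4_eq_xxxx)
  also have "\<dots> = 4*(p-t)*t*c / (9*p*q\<^sup>2*u\<^sup>2*z\<^sup>2)"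
    unfolding T u[symmetric] c[symmetric] using \<open>u \<noteq> 0\<close> \<open>z \<noteq> 0\<close> assms
    by (simp add: field_simps power2_eq_square power3_eq_cube)
  finally show ?thesis unfolding u z c .
qed

lemma mean_gap_deriv_sign:
  assumes "0 < p" "p < 1" "0 < t" "t < 1" "t\<^sup>2 < p*(1+2*t)"
  obtains d where
    "((\<lambda>t. G t p (partner t p) - (Phi p + Phi (partner t p)) / 2) has_real_derivative d) (at t)"
    "sgn d = sgn (p - t)"
proof -
  define q where "q = partner t p"
  define Q' where "Q' = 2*t*(1-t\<^sup>2)*(p + 3*p*t\<^sup>2 - 3*t*p\<^sup>2 - t^3) / (crit_den t p)\<^sup>2"
  define c where "c = 2*q + t^3 - q^3 - t*q\<^sup>2 - t\<^sup>2*q"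
  define k where "k = Q' * (4*t*c / (9*p*q\<^sup>2*(1-t\<^sup>2)\<^sup>2*(1-q\<^sup>2)\<^sup>2))"
  have D: "0 < crit_den t p" using crit_den_pos assms by simp
  have q: "0 < q" "q < 1"
    using partner_pos[of p t] partner_less_1_iff[of p t] assms unfolding q_def by auto
  then have "\<bar>q\<bar> < 1" by simp
  have "0 < 1 - t\<^sup>2" "0 < 1 - q\<^sup>2" using one_minus_square_pos q assms by auto
  have "0 < Q'" unfolding Q'_def
    using D assms partner_slope_pos \<open>0 < 1 - t\<^sup>2\<close> by simp
  have dQ: "((\<lambda>t. partner t p) has_real_derivative Q') (at t)"
    unfolding Q'_def using partner_deriv D by simp
  have "crit t p q = 0" using crit_eq_0_iff_partner D unfolding q_def by simp
  \<comment> \<open>so the \<open>x\<close>-partial of \<open>G\<close> vanishes and only the \<open>q\<close>-partials contribute\<close>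
  then have dG: "((\<lambda>t. G t p (partner t p)) has_real_derivative Q' * (G2 t / p - G1 t) / q\<^sup>2) (at t)"
    using G_curve_deriv[of t p "\<lambda>t. partner t p", OF _ _ _ dQ] assms q unfolding q_def by simp
  have dPhi: "((\<lambda>t. (Phi p + Phi (partner t p)) / 2) has_real_derivative
      (0 + 8*(2-q\<^sup>2) / (9*(1-q\<^sup>2)\<^sup>2) * Q') / 2) (at t)"
    unfolding q_def
    by (intro DERIV_cdivide DERIV_add DERIV_const DERIV_chain2[OF Phi_deriv dQ]) (use \<open>\<bar>q\<bar> < 1\<close> q_def in simp)
  have "Q' * (G2 t / p - G1 t) / q\<^sup>2 - (0 + 8*(2-q\<^sup>2) / (9*(1-q\<^sup>2)\<^sup>2) * Q') / 2
      = Q' * ((G2 t / p - G1 t) / q\<^sup>2 - 4*(2-q\<^sup>2) / (9*(1-q\<^sup>2)\<^sup>2))"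
    using \<open>0 < 1 - q\<^sup>2\<close> by (simp add: field_simps)
  also have "\<dots> = k * (p - t)"
    using G_Phi_partial_q_at_crit[OF assms(1) q(1,2) _ assms(4) \<open>crit t p q = 0\<close>] assms
    unfolding k_def c_def by (simp add: algebra_simps)
  finally have "((\<lambda>t. G t p (partner t p) - (Phi p + Phi (partner t p)) / 2) has_real_derivative
      k * (p - t)) (at t)"
    using DERIV_diff[OF dG dPhi] by simp
  moreover have "0 < c" using crit_cubic_pos q assms unfolding c_def by simp
  then have "0 < k" unfolding k_def
    using \<open>0 < Q'\<close> \<open>0 < 1 - t\<^sup>2\<close> \<open>0 < 1 - q\<^sup>2\<close> q assms by simp
  ultimately show ?thesis using that[of "k * (p - t)"] by (simp add: sgn_mult)
qed

lemma G_crit_less_mean: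
  assumes "0 < p" "p < 1" "0 < q" "q < 1" "0 < x" "x < 1" "crit x p q = 0" "x \<noteq> p"
  shows "G x p q < (Phi p + Phi q) / 2"
proof -
  define M where "M t = G t p (partner t p) - (Phi p + Phi (partner t p)) / 2" for t
  have "0 < crit_den x p" using crit_den_pos assms by simp
  then have "partner x p = q" using crit_eq_0_iff_partner assms(7) by simp
  then have "x\<^sup>2 < p*(1+2*x)" using partner_less_1_iff[of p x] assms by simp
  \<comment> \<open>\<open>t\<^sup>2 < p*(1+2*t)\<close> means \<open>partner t p < 1\<close>; it holds at \<open>p\<close> and \<open>x\<close>, hence between by convexity\<close>
  have admissible: "t\<^sup>2 < p*(1+2*t)" if "min p x \<le> t" "t \<le> max p x" for t
  proof (cases "t \<le> p")
    case True
    have "0 < t" "t < 1" using True that assms by auto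
    then have "t\<^sup>2 < t" "p \<le> p*(1+2*t)" using assms by (auto simp: power2_eq_square)
    then show ?thesis using True by linarith
  next
    case False
    then have "0 \<le> (x - t)*(x + t - 2*p)" using that by (intro mult_nonneg_nonneg) auto
    moreover have "(x - t)*(x + t - 2*p) = (x\<^sup>2 - p*(1+2*x)) - (t\<^sup>2 - p*(1+2*t))" by algebra
    ultimately show ?thesis using \<open>x\<^sup>2 < p*(1+2*x)\<close> by linarith
  qed
  have deriv: "\<exists>d. (M has_real_derivative d) (at t) \<and> sgn d = sgn (p - t)"
    if "min p x \<le> t" "t \<le> max p x" for t
    using mean_gap_deriv_sign[of p t] admissible[OF that] that assms unfolding M_def by force
  then have "continuous_on {min p x..max p x} M"
    by (intro continuous_at_imp_continuous_on ballI) (metis DERIV_isCont atLeastAtMost_iff)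
  have "M p = 0"
    using partner_self G_diag assms unfolding M_def by simp
  moreover have "M x < M p"
  proof (cases "x < p")
    case True
    show ?thesis
    proof (rule DERIV_pos_imp_increasing_open[OF True])
      fix t assume "x < t" "t < p"
      then show "\<exists>d. (M has_real_derivative d) (at t) \<and> 0 < d"
        using deriv[of t] by (auto simp: sgn_1_pos)
    qed (use \<open>continuous_on {min p x..max p x} M\<close> True in simp)
  next
    case False
    then have "p < x" using assms by simp
    show ?thesis
    proof (rule DERIV_neg_imp_decreasing_open[OF \<open>p < x\<close>])
      fix t assume "p < t" "t < x"
      then show "\<exists>d. (M has_real_derivative d) (at t) \<and> d < 0"
        using deriv[of t] by (auto simp: sgn_1_neg)
    qed (use \<open>continuous_on {min p x..max p x} M\<close> \<open>p < x\<close> in simp)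
  qed
  ultimately show ?thesis using \<open>partner x p = q\<close> partner_self assms unfolding M_def by simp
qed

lemma tanh_cos_bounds:
  assumes "0 < r" "\<alpha> \<in> {0..<pi/2}"
  shows "0 < tanh r * cos \<alpha>" "tanh r * cos \<alpha> < 1"
proof -
  have "0 < cos \<alpha>" "cos \<alpha> \<le> 1" using assms by (auto intro: cos_gt_zero_pi)
  moreover have "0 < tanh r" "tanh r < 1" using assms tanh_real_lt_1 by auto
  ultimately show "0 < tanh r * cos \<alpha>" "tanh r * cos \<alpha> < 1"
    by (auto intro: le_less_trans[OF mult_left_le])
qed

lemma g_eq_G_angles:
  assumes "0 < r" "\<alpha> \<in> {0..<pi/2}" "\<beta> \<in> {0..<pi/2}" "0 \<le> l"
  shows "g r l \<alpha> \<beta> = G (tanh (l/2)) (tanh r * cos \<alpha>) (tanh r * cos \<beta>)"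
  using g_eq_G tanh_cos_bounds assms by (metis less_irrefl mult_zero_left mult_zero_right)

lemma f_eq_G_max:
  assumes "0 < r" "\<alpha> \<in> {0..<pi/2}" "\<beta> \<in> {0..<pi/2}" "0 \<le> x" "x < 1"
    and "\<And>y. 0 \<le> y \<Longrightarrow> y < 1 \<Longrightarrow> G y (tanh r * cos \<alpha>) (tanh r * cos \<beta>)
                                      \<le> G x (tanh r * cos \<alpha>) (tanh r * cos \<beta>)"
  shows "f r \<alpha> \<beta> = G x (tanh r * cos \<alpha>) (tanh r * cos \<beta>)"
proof -
  define m where "m = 2 * artanh x"
  have m: "0 \<le> m" "tanh (m/2) = x"
    using tanh_artanh_real[of x] assms tanh_real_nonneg_iff[of "artanh x"] unfolding m_def by auto
  have "g r l \<alpha> \<beta> \<le> g r m \<alpha> \<beta>" if "0 \<le> l" for l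
    using that m assms g_eq_G_angles tanh_real_lt_1[of "l/2"] by simp
  then have "f r \<alpha> \<beta> = g r m \<alpha> \<beta>"
    unfolding f_def using m by (intro cSup_eq_maximum) auto
  then show ?thesis using g_eq_G_angles assms m by simp
qed

lemma g_diag_strict_max:
  assumes "0 < r" "\<alpha> \<in> {0..<pi/2}" "0 \<le> l" "l \<noteq> 2 * artanh (tanh r * cos \<alpha>)"
  shows "g r l \<alpha> \<alpha> < g r (2 * artanh (tanh r * cos \<alpha>)) \<alpha> \<alpha>"
proof -
  define p where "p = tanh r * cos \<alpha>"
  define m where "m = 2 * artanh p"
  have p: "0 < p" "p < 1" using tanh_cos_bounds[OF assms(1,2)] unfolding p_def by simp_all
  then have "\<bar>p\<bar> < 1" by simp
  have "tanh (artanh p) = p" using tanh_artanh_real[OF \<open>\<bar>p\<bar> < 1\<close>] .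
  then have "tanh (m/2) = p" "0 \<le> m"
    using p tanh_real_nonneg_iff[of "artanh p"] unfolding m_def by simp_all
  have "tanh (l/2) \<noteq> p" using tanh_half_eq_iff[OF \<open>\<bar>p\<bar> < 1\<close>, of l] assms(4) unfolding p_def by simp
  have "g r l \<alpha> \<alpha> = G (tanh (l/2)) p p" using g_eq_G_angles[OF assms(1,2,2,3)] unfolding p_def .
  also have "\<dots> < G p p p"
    using G_diag_max[OF p] \<open>tanh (l/2) \<noteq> p\<close> assms(3) tanh_real_lt_1[of "l/2"] by simp
  also have "\<dots> = g r m \<alpha> \<alpha>"
    using g_eq_G_angles[OF assms(1,2,2) \<open>0 \<le> m\<close>] \<open>tanh (m/2) = p\<close> unfolding p_def by simp
  finally show ?thesis unfolding m_def p_def .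
qed

lemma f_diag:
  assumes "0 < r" "\<alpha> \<in> {0..<pi/2}"
  shows "f r \<alpha> \<alpha> = Phi (tanh r * cos \<alpha>)"
proof -
  define p where "p = tanh r * cos \<alpha>"
  have p: "0 < p" "p < 1" using tanh_cos_bounds[OF assms] unfolding p_def by simp_all
  have "G y p p \<le> G p p p" if "0 \<le> y" "y < 1" for y
    using G_diag_max[OF p that] by (cases "y = p") auto
  then have "f r \<alpha> \<alpha> = G p p p"
    using f_eq_G_max[OF assms assms(2), of p] p unfolding p_def by simp
  also have "\<dots> = Phi p" using G_diag[of p] p by simp
  finally show ?thesis unfolding p_def .
qed

lemma f_off_diag_less:
  assumes "0 < r" "\<alpha> \<in> {0..<pi/2}" "\<beta> \<in> {0..<pi/2}" "\<alpha> \<noteq> \<beta>"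
  shows "f r \<alpha> \<beta> < (Phi (tanh r * cos \<alpha>) + Phi (tanh r * cos \<beta>)) / 2"
proof -
  define p q where "p = tanh r * cos \<alpha>" and "q = tanh r * cos \<beta>"
  have pq: "0 < p" "p < 1" "0 < q" "q < 1"
    using tanh_cos_bounds[OF assms(1,2)] tanh_cos_bounds[OF assms(1,3)] unfolding p_def q_def by simp_all
  have "0 \<le> \<alpha>" "\<alpha> \<le> pi" "0 \<le> \<beta>" "\<beta> \<le> pi" using assms(2,3) by auto
  then have "cos \<alpha> \<noteq> cos \<beta>" using cos_inj_pi assms(4) by blast
  moreover have "0 < tanh r" using assms(1) by simp
  ultimately have "p \<noteq> q" unfolding p_def q_def by simp
  then obtain x where x: "min p q < x" "x < max p q" "crit x p q = 0"
      "\<And>y. 0 \<le> y \<Longrightarrow> y < 1 \<Longrightarrow> G y p q \<le> G x p q"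
    using G_max_at_crit[OF pq] by blast
  have "0 < x" "x < 1" using x(1,2) pq by auto
  then have "f r \<alpha> \<beta> = G x p q"
    using f_eq_G_max[OF assms(1,2,3), of x] x(4) unfolding p_def q_def by simp
  also have "\<dots> < (Phi p + Phi q) / 2"
    using G_crit_less_mean[OF pq \<open>0 < x\<close> \<open>x < 1\<close> x(3)] x(1,2) by auto
  finally show ?thesis unfolding p_def q_def .
qed

theorem lemma5:
  fixes r :: real
  assumes "r > 0"
  shows "(\<forall>\<alpha>\<in>{0..<pi/2}. \<forall>l\<in>{0..}.
            l \<noteq> 2 * artanh (tanh r * cos \<alpha>) \<longrightarrow>
              g r l \<alpha> \<alpha> < g r (2 * artanh (tanh r * cos \<alpha>)) \<alpha> \<alpha>)
       \<and> (\<forall>\<alpha>\<in>{0..<pi/2}. \<forall>\<beta>\<in>{0..<pi/2}.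
            f r \<alpha> \<beta> \<le> (f r \<alpha> \<alpha> + f r \<beta> \<beta>) / 2
            \<and> (f r \<alpha> \<beta> = (f r \<alpha> \<alpha> + f r \<beta> \<beta>) / 2 \<longrightarrow> \<alpha> = \<beta>))"
proof (intro conjI ballI impI)
  fix \<alpha> l assume "\<alpha> \<in> {0..<pi/2}" "l \<in> {0::real..}" "l \<noteq> 2 * artanh (tanh r * cos \<alpha>)"
  then show "g r l \<alpha> \<alpha> < g r (2 * artanh (tanh r * cos \<alpha>)) \<alpha> \<alpha>"
    using g_diag_strict_max assms by simp
next
  fix \<alpha> \<beta> assume \<alpha>: "\<alpha> \<in> {0..<pi/2}" and \<beta>: "\<beta> \<in> {0..<pi/2}"
  have off_diag: "f r \<alpha> \<beta> < (f r \<alpha> \<alpha> + f r \<beta> \<beta>) / 2" if "\<alpha> \<noteq> \<beta>"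
    using f_off_diag_less[OF assms \<alpha> \<beta> that] f_diag[OF assms \<alpha>] f_diag[OF assms \<beta>] by simp
  show "f r \<alpha> \<beta> \<le> (f r \<alpha> \<alpha> + f r \<beta> \<beta>) / 2"
    using off_diag by (cases "\<alpha> = \<beta>") simp_all
  show "\<alpha> = \<beta>" if "f r \<alpha> \<beta> = (f r \<alpha> \<alpha> + f r \<beta> \<beta>) / 2"
    using off_diag that by (cases "\<alpha> = \<beta>") simp_all
qed

end
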